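(* Let $R$ be a ring, $M$ a left $R$-module and $P$ a submodule of $M$. If $P$ is strongly irreducible in $M$ or $P$ is strongly hollow in $M$, then $\mathrm{Hom}_R(P/(P\cap Q),Q/(P\cap Q))=0$ for every submodule $Q$ of $M$.
   Context: $P$ is strongly irreducible in $M$ if for all submodules $K,L$ of $M$, $K\cap L\subseteq P$ implies $K\subseteq P$ or $L\subseteq P$. $P$ is strongly hollow in $M$ if for all submodules $K,L$ of $M$, $P\subseteq K+L$ implies $P\subseteq K$ or $P\subseteq L$. *)

theory Defs
  imports "HOL-Algebra.Module" "HOL-Algebra.AbelCoset"
begin

text \<open>Left modules over an arbitrary (not necessarily commutative) ring.
  The library locale module requires a commutative ring, so we state the
  same axioms relative to ring R.\<close>

definition left_module :: "('a, 'c) ring_scheme \<Rightarrow> ('a, 'b, 'd) module_scheme \<Rightarrow> bool" where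
  "left_module R M \<longleftrightarrow> ring R \<and> abelian_group M \<and>
     (\<forall>a\<in>carrier R. \<forall>x\<in>carrier M. a \<odot>\<^bsub>M\<^esub> x \<in> carrier M) \<and>
     (\<forall>a\<in>carrier R. \<forall>b\<in>carrier R. \<forall>x\<in>carrier M.
        (a \<oplus>\<^bsub>R\<^esub> b) \<odot>\<^bsub>M\<^esub> x = a \<odot>\<^bsub>M\<^esub> x \<oplus>\<^bsub>M\<^esub> b \<odot>\<^bsub>M\<^esub> x) \<and>
     (\<forall>a\<in>carrier R. \<forall>x\<in>carrier M. \<forall>y\<in>carrier M.
        a \<odot>\<^bsub>M\<^esub> (x \<oplus>\<^bsub>M\<^esub> y) = a \<odot>\<^bsub>M\<^esub> x \<oplus>\<^bsub>M\<^esub> a \<odot>\<^bsub>M\<^esub> y) \<and>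
     (\<forall>a\<in>carrier R. \<forall>b\<in>carrier R. \<forall>x\<in>carrier M.
        (a \<otimes>\<^bsub>R\<^esub> b) \<odot>\<^bsub>M\<^esub> x = a \<odot>\<^bsub>M\<^esub> (b \<odot>\<^bsub>M\<^esub> x)) \<and>
     (\<forall>x\<in>carrier M. \<one>\<^bsub>R\<^esub> \<odot>\<^bsub>M\<^esub> x = x)"

definition strongly_irreducible :: "('a, 'c) ring_scheme \<Rightarrow> ('a, 'b, 'd) module_scheme \<Rightarrow> 'b set \<Rightarrow> bool" where
  "strongly_irreducible R M P \<longleftrightarrow>
     (\<forall>K L. submodule K R M \<longrightarrow> submodule L R M \<longrightarrow> K \<inter> L \<subseteq> P \<longrightarrow> K \<subseteq> P \<or> L \<subseteq> P)"

definition strongly_hollow :: "('a, 'c) ring_scheme \<Rightarrow> ('a, 'b, 'd) module_scheme \<Rightarrow> 'b set \<Rightarrow> bool" where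
  "strongly_hollow R M P \<longleftrightarrow>
     (\<forall>K L. submodule K R M \<longrightarrow> submodule L R M \<longrightarrow> P \<subseteq> K <+>\<^bsub>M\<^esub> L \<longrightarrow> P \<subseteq> K \<or> P \<subseteq> L)"

text \<open>The quotient module M/N: carrier the additive cosets N +> x,
  addition of cosets, zero N, and scalar multiplication r(N+x) = N + r x
  (written as N <+> (r X), which is that coset). The ring fields mult/one
  of the record are irrelevant and left undefined.\<close>

definition quot_module :: "('a, 'b, 'd) module_scheme \<Rightarrow> 'b set \<Rightarrow> ('a, 'b set) module" where
  "quot_module M N = \<lparr>carrier = a_rcosets\<^bsub>M\<^esub> N, mult = undefined, one = undefined,
     zero = N, add = set_add M, smult = (\<lambda>r X. N <+>\<^bsub>M\<^esub> ((\<lambda>x. r \<odot>\<^bsub>M\<^esub> x) ` X))\<rparr>"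

definition lin_hom :: "('a, 'c) ring_scheme \<Rightarrow> ('a, 'b, 'd) module_scheme \<Rightarrow> ('a, 'e, 'f) module_scheme \<Rightarrow> ('b \<Rightarrow> 'e) set" where
  "lin_hom R A B = {f. f \<in> carrier A \<rightarrow> carrier B \<and>
     (\<forall>x\<in>carrier A. \<forall>y\<in>carrier A. f (x \<oplus>\<^bsub>A\<^esub> y) = f x \<oplus>\<^bsub>B\<^esub> f y) \<and>
     (\<forall>r\<in>carrier R. \<forall>x\<in>carrier A. f (r \<odot>\<^bsub>A\<^esub> x) = r \<odot>\<^bsub>B\<^esub> f x)}"

end

theory Submission
  imports Defs
begin

text \<open>A homomorphism \<open>f : P/(P \<inter> Q) \<rightarrow> Q/(P \<inter> Q)\<close> determines the submodule
  \<open>K = {p - q | f(p + P \<inter> Q) = q + P \<inter> Q}\<close> of \<open>M\<close>, the image of its graph under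
  subtraction. It satisfies \<open>K \<inter> Q \<subseteq> P\<close> and \<open>P \<subseteq> K + Q\<close>. Strong irreducibility of \<open>P\<close>
  therefore gives \<open>K \<subseteq> P\<close> or \<open>Q \<subseteq> P\<close>, and strong hollowness gives \<open>P \<subseteq> K\<close> or \<open>P \<subseteq> Q\<close>;
  here \<open>Q \<subseteq> P\<close> already implies \<open>K \<subseteq> P\<close>, and \<open>P \<subseteq> Q\<close> implies \<open>P \<subseteq> K\<close>. Finally each of
  \<open>K \<subseteq> P\<close> and \<open>P \<subseteq> K\<close> forces \<open>f = 0\<close>: in the first case every value \<open>q + P \<inter> Q\<close> of \<open>f\<close>
  has \<open>q \<in> P \<inter> Q\<close>; in the second every \<open>p \<in> P\<close> is some \<open>p' - q'\<close> with
  \<open>q' = p' - p \<in> P \<inter> Q\<close>, so \<open>f(p + P \<inter> Q) = q' + P \<inter> Q = 0\<close>.\<close>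

locale left_module_over =
  fixes R :: "('a, 'c) ring_scheme" and M :: "('a, 'b, 'd) module_scheme" (structure)
  assumes is_left_module: "left_module R M"
begin

sublocale abelian_group M
  using is_left_module by (simp add: left_module_def)

sublocale R: ring R
  using is_left_module by (simp add: left_module_def)

lemma smult_closed [simp, intro]: "a \<in> carrier R \<Longrightarrow> x \<in> carrier M \<Longrightarrow> a \<odot> x \<in> carrier M"
  using is_left_module by (simp add: left_module_def)

lemma smult_l_distr:
  "a \<in> carrier R \<Longrightarrow> b \<in> carrier R \<Longrightarrow> x \<in> carrier M \<Longrightarrow> (a \<oplus>\<^bsub>R\<^esub> b) \<odot> x = a \<odot> x \<oplus> b \<odot> x"
  using is_left_module by (simp add: left_module_def)

lemma smult_r_distr:
  "a \<in> carrier R \<Longrightarrow> x \<in> carrier M \<Longrightarrow> y \<in> carrier M \<Longrightarrow> a \<odot> (x \<oplus> y) = a \<odot> x \<oplus> a \<odot> y"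
  using is_left_module by (simp add: left_module_def)

lemma smult_one [simp]: "x \<in> carrier M \<Longrightarrow> \<one>\<^bsub>R\<^esub> \<odot> x = x"
  using is_left_module by (simp add: left_module_def)

lemma smult_l_null [simp]:
  assumes x: "x \<in> carrier M"
  shows "\<zero>\<^bsub>R\<^esub> \<odot> x = \<zero>"
proof -
  have "\<zero>\<^bsub>R\<^esub> \<odot> x \<oplus> \<zero>\<^bsub>R\<^esub> \<odot> x = \<zero>\<^bsub>R\<^esub> \<odot> x \<oplus> \<zero>"
    using smult_l_distr[of "\<zero>\<^bsub>R\<^esub>" "\<zero>\<^bsub>R\<^esub>" x] x by simp
  then show ?thesis using x by (simp del: r_zero)
qed

lemma smult_r_null [simp]:
  assumes a: "a \<in> carrier R"
  shows "a \<odot> \<zero> = \<zero>"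
proof -
  have "a \<odot> \<zero> \<oplus> a \<odot> \<zero> = a \<odot> \<zero> \<oplus> \<zero>"
    using smult_r_distr[of a \<zero> \<zero>] a by simp
  then show ?thesis using a by (simp del: r_zero)
qed

lemma smult_l_minus:
  assumes a: "a \<in> carrier R" and x: "x \<in> carrier M"
  shows "(\<ominus>\<^bsub>R\<^esub> a) \<odot> x = \<ominus> (a \<odot> x)"
proof (rule sym, rule minus_equality)
  show "(\<ominus>\<^bsub>R\<^esub> a) \<odot> x \<oplus> a \<odot> x = \<zero>"
    using smult_l_distr[of "\<ominus>\<^bsub>R\<^esub> a" a x] a x by (simp add: R.l_neg)
qed (use a x in simp_all)

lemma smult_r_minus:
  assumes a: "a \<in> carrier R" and x: "x \<in> carrier M"
  shows "a \<odot> (\<ominus> x) = \<ominus> (a \<odot> x)"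
proof (rule sym, rule minus_equality)
  show "a \<odot> (\<ominus> x) \<oplus> a \<odot> x = \<zero>"
    using smult_r_distr[of a "\<ominus> x" x] a x by (simp add: l_neg)
qed (use a x in simp_all)

lemma smult_r_diff_distr:
  "a \<in> carrier R \<Longrightarrow> x \<in> carrier M \<Longrightarrow> y \<in> carrier M \<Longrightarrow> a \<odot> (x \<ominus> y) = a \<odot> x \<ominus> a \<odot> y"
  by (simp add: a_minus_def smult_r_distr smult_r_minus)

lemma submoduleI:
  assumes "H \<subseteq> carrier M" and "\<zero> \<in> H"
    and "\<And>x y. x \<in> H \<Longrightarrow> y \<in> H \<Longrightarrow> x \<oplus> y \<in> H"
    and smult: "\<And>a x. a \<in> carrier R \<Longrightarrow> x \<in> H \<Longrightarrow> a \<odot> x \<in> H"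
  shows "submodule H R M"
proof -
  have "\<ominus> x \<in> H" if "x \<in> H" for x
    using smult[of "\<ominus>\<^bsub>R\<^esub> \<one>\<^bsub>R\<^esub>" x] smult_l_minus[of "\<one>\<^bsub>R\<^esub>" x] that assms(1) by auto
  then show ?thesis
    using assms by (auto intro!: submodule.intro subgroup.intro simp: submodule_axioms_def a_inv_def)
qed

lemma submodule_is_abelian_subgroup: "submodule H R M \<Longrightarrow> abelian_subgroup H M"
  by (intro abelian_subgroupI3 additive_subgroup.intro submodule.axioms(1))
    (simp_all add: abelian_group_axioms)

lemma submodule_Int: "submodule H R M \<Longrightarrow> submodule K R M \<Longrightarrow> submodule (H \<inter> K) R M"
  by (auto intro!: submodule.intro add.subgroups_Inter_pair simp: submodule_def submodule_axioms_def)

context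
  fixes N assumes N_submodule: "submodule N R M"
begin

interpretation N: abelian_subgroup N M
  using N_submodule by (rule submodule_is_abelian_subgroup)

lemma rcos_eq_iff:
  assumes "x \<in> carrier M" "y \<in> carrier M"
  shows "N +> x = N +> y \<longleftrightarrow> x \<ominus> y \<in> N"
proof -
  have "N +> x = N +> y \<longleftrightarrow> x \<in> N +> y"
    using assms N.a_repr_independenceD N.a_repr_independence' by metis
  also have "\<dots> \<longleftrightarrow> x \<ominus> y \<in> N"
    using assms by (simp add: N.a_rcos_module a_minus_def)
  finally show ?thesis .
qed

lemma rcos_eq_self_iff: "x \<in> carrier M \<Longrightarrow> N +> x = N \<longleftrightarrow> x \<in> N"
  using N.a_rcos_const N.a_rcos_self by metis

lemma rcos_add: "x \<in> carrier M \<Longrightarrow> y \<in> carrier M \<Longrightarrow> (N +> x) <+>\<^bsub>M\<^esub> (N +> y) = N +> (x \<oplus> y)"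
  by (rule N.a_rcos_sum)

lemma rcos_smult:
  assumes a: "a \<in> carrier R" and x: "x \<in> carrier M"
  shows "N <+>\<^bsub>M\<^esub> ((\<lambda>y. a \<odot> y) ` (N +> x)) = N +> (a \<odot> x)"
proof (intro equalityI subsetI)
  fix z assume "z \<in> N <+>\<^bsub>M\<^esub> ((\<lambda>y. a \<odot> y) ` (N +> x))"
  then obtain n m where nm: "n \<in> N" "m \<in> N" "z = n \<oplus> a \<odot> (m \<oplus> x)"
    by (auto simp: set_add_def' a_r_coset_def')
  then have "z = (n \<oplus> a \<odot> m) \<oplus> a \<odot> x"
    using a x by (simp add: smult_r_distr a_assoc)
  moreover have "n \<oplus> a \<odot> m \<in> N"
    using nm a N_submodule by (simp add: submodule.smult_closed)
  ultimately show "z \<in> N +> (a \<odot> x)"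
    by (auto simp: a_r_coset_def')
next
  fix z assume "z \<in> N +> (a \<odot> x)"
  then obtain n where "n \<in> N" "z = n \<oplus> a \<odot> (\<zero> \<oplus> x)"
    using x by (auto simp: a_r_coset_def')
  then show "z \<in> N <+>\<^bsub>M\<^esub> ((\<lambda>y. a \<odot> y) ` (N +> x))"
    unfolding set_add_def' a_r_coset_def' using N.zero_closed by blast
qed

end

end

lemma quot_module_restrict_simps:
  fixes M :: "('a, 'b, 'd) module_scheme"
  shows "carrier (quot_module (M\<lparr>carrier := H\<rparr>) N) = {N +>\<^bsub>M\<^esub> h | h. h \<in> H}"
    and "zero (quot_module (M\<lparr>carrier := H\<rparr>) N) = N"
    and "add (quot_module (M\<lparr>carrier := H\<rparr>) N) = set_add M"
    and "smult (quot_module (M\<lparr>carrier := H\<rparr>) N) = (\<lambda>a X. N <+>\<^bsub>M\<^esub> ((\<lambda>x. a \<odot>\<^bsub>M\<^esub> x) ` X))"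
  by (auto simp: quot_module_def A_RCOSETS_def RCOSETS_def a_r_coset_def r_coset_def
      set_add_def set_mult_def fun_eq_iff)

locale quotient_hom = left_module_over +
  fixes P Q :: "'b set" and f :: "'b set \<Rightarrow> 'b set"
  assumes P: "submodule P R M" and Q: "submodule Q R M"
    and hom: "f \<in> lin_hom R (quot_module (M\<lparr>carrier := P\<rparr>) (P \<inter> Q))
                          (quot_module (M\<lparr>carrier := Q\<rparr>) (P \<inter> Q))"
begin

abbreviation N :: "'b set" where "N \<equiv> P \<inter> Q"

lemma N_submodule: "submodule N R M"
  using P Q by (rule submodule_Int)

interpretation P: abelian_subgroup P M using P by (rule submodule_is_abelian_subgroup)
interpretation Q: abelian_subgroup Q M using Q by (rule submodule_is_abelian_subgroup)
interpretation N: abelian_subgroup N M using N_submodule by (rule submodule_is_abelian_subgroup)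

lemma hom_closed: "f \<in> {N +> p | p. p \<in> P} \<rightarrow> {N +> q | q. q \<in> Q}"
  using hom by (simp add: lin_hom_def quot_module_restrict_simps)

lemma hom_rcos: "p \<in> P \<Longrightarrow> \<exists>q\<in>Q. f (N +> p) = N +> q"
  using hom_closed by blast

lemma hom_set_add:
  assumes "p \<in> P" "p' \<in> P"
  shows "f ((N +> p) <+>\<^bsub>M\<^esub> (N +> p')) = f (N +> p) <+>\<^bsub>M\<^esub> f (N +> p')"
proof -
  let ?P = "quot_module (M\<lparr>carrier := P\<rparr>) N" and ?Q = "quot_module (M\<lparr>carrier := Q\<rparr>) N"
  have "\<forall>X\<in>carrier ?P. \<forall>Y\<in>carrier ?P. f (X \<oplus>\<^bsub>?P\<^esub> Y) = f X \<oplus>\<^bsub>?Q\<^esub> f Y"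
    using hom by (simp add: lin_hom_def)
  moreover have "N +> p \<in> carrier ?P" "N +> p' \<in> carrier ?P"
    using assms by (auto simp: quot_module_restrict_simps)
  ultimately show ?thesis
    by (simp add: quot_module_restrict_simps)
qed

lemma hom_rcos_smult:
  assumes "a \<in> carrier R" "p \<in> P"
  shows "f (N <+>\<^bsub>M\<^esub> ((\<lambda>x. a \<odot> x) ` (N +> p))) = N <+>\<^bsub>M\<^esub> ((\<lambda>x. a \<odot> x) ` f (N +> p))"
proof -
  let ?P = "quot_module (M\<lparr>carrier := P\<rparr>) N" and ?Q = "quot_module (M\<lparr>carrier := Q\<rparr>) N"
  have "\<forall>a\<in>carrier R. \<forall>X\<in>carrier ?P. f (a \<odot>\<^bsub>?P\<^esub> X) = a \<odot>\<^bsub>?Q\<^esub> f X"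
    using hom by (simp add: lin_hom_def)
  moreover have "N +> p \<in> carrier ?P"
    using assms by (auto simp: quot_module_restrict_simps)
  ultimately show ?thesis
    using assms(1) by (simp add: quot_module_restrict_simps)
qed

lemma hom_add:
  assumes "p \<in> P" "p' \<in> P" "q \<in> Q" "q' \<in> Q"
    and "f (N +> p) = N +> q" "f (N +> p') = N +> q'"
  shows "f (N +> (p \<oplus> p')) = N +> (q \<oplus> q')"
proof -
  have "f (N +> (p \<oplus> p')) = f ((N +> p) <+>\<^bsub>M\<^esub> (N +> p'))"
    using assms(1,2) by (simp add: rcos_add[OF N_submodule])
  also have "\<dots> = f (N +> p) <+>\<^bsub>M\<^esub> f (N +> p')"
    using assms(1,2) by (rule hom_set_add)
  also have "\<dots> = N +> (q \<oplus> q')"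
    using assms by (simp add: rcos_add[OF N_submodule])
  finally show ?thesis .
qed

lemma hom_smult:
  assumes "a \<in> carrier R" "p \<in> P" "q \<in> Q" and "f (N +> p) = N +> q"
  shows "f (N +> (a \<odot> p)) = N +> (a \<odot> q)"
proof -
  have "f (N +> (a \<odot> p)) = f (N <+>\<^bsub>M\<^esub> ((\<lambda>x. a \<odot> x) ` (N +> p)))"
    using assms(1,2) by (simp add: rcos_smult[OF N_submodule])
  also have "\<dots> = N <+>\<^bsub>M\<^esub> ((\<lambda>x. a \<odot> x) ` f (N +> p))"
    using assms(1,2) by (rule hom_rcos_smult)
  also have "\<dots> = N +> (a \<odot> q)"
    using assms by (simp add: rcos_smult[OF N_submodule])
  finally show ?thesis .
qed

lemma hom_zero: "f N = N"
proof -
  obtain q where q: "q \<in> Q" "f (N +> \<zero>) = N +> q"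
    using hom_rcos P.zero_closed by blast
  then have "f (N +> (\<zero>\<^bsub>R\<^esub> \<odot> \<zero>)) = N +> (\<zero>\<^bsub>R\<^esub> \<odot> q)"
    by (intro hom_smult) simp_all
  moreover have "N +> \<zero> = N"
    using N.a_subset by simp
  ultimately show ?thesis
    using q by simp
qed

definition graph :: "'b set" where
  "graph = {p \<ominus> q | p q. p \<in> P \<and> q \<in> Q \<and> f (N +> p) = N +> q}"

lemma in_graph: "p \<in> P \<Longrightarrow> q \<in> Q \<Longrightarrow> f (N +> p) = N +> q \<Longrightarrow> p \<ominus> q \<in> graph"
  unfolding graph_def by blast

lemma graph_submodule: "submodule graph R M"
proof (rule submoduleI)
  show "graph \<subseteq> carrier M"
    unfolding graph_def by auto
  have "\<zero> \<ominus> \<zero> \<in> graph"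
    using in_graph[of \<zero> \<zero>] hom_zero N.a_subset by simp
  then show "\<zero> \<in> graph"
    by (simp only: a_minus_def r_neg zero_closed)
next
  fix x y assume "x \<in> graph" "y \<in> graph"
  then obtain p q p' q' where pq: "p \<in> P" "q \<in> Q" "f (N +> p) = N +> q" "x = p \<ominus> q"
    and pq': "p' \<in> P" "q' \<in> Q" "f (N +> p') = N +> q'" "y = p' \<ominus> q'"
    unfolding graph_def by blast
  have "x \<oplus> y = (p \<oplus> p') \<ominus> (q \<oplus> q')"
    using pq pq' by (simp add: a_minus_def minus_add a_ac)
  then show "x \<oplus> y \<in> graph"
    using pq pq' by (simp add: in_graph hom_add)
next
  fix a x assume a: "a \<in> carrier R" and "x \<in> graph"
  then obtain p q where pq: "p \<in> P" "q \<in> Q" "f (N +> p) = N +> q" "x = p \<ominus> q"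
    unfolding graph_def by blast
  then have "a \<odot> x = a \<odot> p \<ominus> a \<odot> q"
    using a by (simp add: smult_r_diff_distr)
  then show "a \<odot> x \<in> graph"
    using a pq P Q by (simp add: in_graph hom_smult submodule.smult_closed)
qed

lemma graph_Int_subset: "graph \<inter> Q \<subseteq> P"
proof
  fix x assume "x \<in> graph \<inter> Q"
  then obtain p q where pq: "p \<in> P" "q \<in> Q" "f (N +> p) = N +> q" "x = p \<ominus> q" and "x \<in> Q"
    unfolding graph_def by blast
  have "p = x \<oplus> q"
    using pq by (simp add: a_minus_def a_assoc l_neg)
  then have "p \<in> Q"
    using pq(2) \<open>x \<in> Q\<close> by simp
  then have "p \<in> N"
    using pq(1) by simp
  then have "N +> q = N"
    using pq hom_zero by (simp add: N.a_rcos_const)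
  then have "q \<in> P"
    using pq rcos_eq_self_iff[OF N_submodule] by simp
  then show "x \<in> P"
    using pq by (simp add: a_minus_def)
qed

lemma subset_graph_set_add: "P \<subseteq> graph <+>\<^bsub>M\<^esub> Q"
proof
  fix p assume p: "p \<in> P"
  then obtain q where q: "q \<in> Q" "f (N +> p) = N +> q"
    using hom_rcos by blast
  have "p = (p \<ominus> q) \<oplus> q"
    using p q by (simp add: a_minus_def a_assoc l_neg)
  then show "p \<in> graph <+>\<^bsub>M\<^esub> Q"
    using p q in_graph unfolding set_add_def' by blast
qed

lemma hom_vanishes_if_graph_subset:
  assumes "graph \<subseteq> P" and p: "p \<in> P"
  shows "f (N +> p) = N"
proof -
  obtain q where q: "q \<in> Q" "f (N +> p) = N +> q"
    using hom_rcos p by blast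
  have "q = p \<ominus> (p \<ominus> q)"
    using p q by (simp add: a_minus_def minus_add a_assoc[symmetric] r_neg)
  moreover have "p \<ominus> (p \<ominus> q) \<in> P"
    using assms in_graph p q by (simp add: a_minus_def subset_iff)
  ultimately have "q \<in> N"
    using q by simp
  then show ?thesis
    using q by (simp add: N.a_rcos_const)
qed

lemma hom_vanishes_if_subset_graph:
  assumes "P \<subseteq> graph" and p: "p \<in> P"
  shows "f (N +> p) = N"
proof -
  obtain p' q' where pq: "p' \<in> P" "q' \<in> Q" "f (N +> p') = N +> q'" "p = p' \<ominus> q'"
    using assms unfolding graph_def by blast
  have "q' = p' \<ominus> p"
    using pq by (simp add: a_minus_def minus_add a_assoc[symmetric] r_neg)
  moreover have "p' \<ominus> p \<in> P"
    using pq(1) p by (simp add: a_minus_def)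
  ultimately have "q' \<in> N"
    using pq(2) by simp
  moreover have "p \<ominus> p' = \<ominus> q'"
    using pq by (simp add: a_minus_def a_ac r_neg2)
  ultimately have "N +> p = N +> p'"
    using pq p by (simp add: rcos_eq_iff[OF N_submodule])
  then show ?thesis
    using pq \<open>q' \<in> N\<close> by (simp add: N.a_rcos_const)
qed

lemma graph_subset_if_strongly_irreducible:
  assumes "strongly_irreducible R M P"
  shows "graph \<subseteq> P"
proof -
  have "graph \<subseteq> P \<or> Q \<subseteq> P"
    using assms graph_submodule Q graph_Int_subset unfolding strongly_irreducible_def by blast
  moreover have "graph \<subseteq> P" if "Q \<subseteq> P"
    using that unfolding graph_def by (auto simp: a_minus_def)
  ultimately show ?thesis
    by blast
qed

lemma subset_graph_if_strongly_hollow: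
  assumes "strongly_hollow R M P"
  shows "P \<subseteq> graph"
proof -
  have "P \<subseteq> graph \<or> P \<subseteq> Q"
    using assms graph_submodule Q subset_graph_set_add unfolding strongly_hollow_def by blast
  moreover have "P \<subseteq> graph" if "P \<subseteq> Q"
  proof
    fix p assume "p \<in> P"
    with that have "f (N +> p) = N +> \<zero>" and "p = p \<ominus> \<zero>"
      using hom_zero N.a_subset by (auto simp: N.a_rcos_const a_minus_def)
    then show "p \<in> graph"
      using \<open>p \<in> P\<close> in_graph by (metis Q.zero_closed)
  qed
  ultimately show ?thesis
    by blast
qed

end

theorem lemma2p11:
  fixes R :: "('a, 'c) ring_scheme" and M :: "('a, 'b, 'd) module_scheme"
  assumes "left_module R M"
    and "submodule P R M"
    and "strongly_irreducible R M P \<or> strongly_hollow R M P"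
  shows "\<forall>Q. submodule Q R M \<longrightarrow>
     (\<forall>f \<in> lin_hom R (quot_module (M\<lparr>carrier := P\<rparr>) (P \<inter> Q))
                      (quot_module (M\<lparr>carrier := Q\<rparr>) (P \<inter> Q)).
        \<forall>X \<in> carrier (quot_module (M\<lparr>carrier := P\<rparr>) (P \<inter> Q)).
          f X = \<zero>\<^bsub>quot_module (M\<lparr>carrier := Q\<rparr>) (P \<inter> Q)\<^esub>)"
proof (intro allI impI ballI)
  fix Q f X
  assume Q: "submodule Q R M"
    and f: "f \<in> lin_hom R (quot_module (M\<lparr>carrier := P\<rparr>) (P \<inter> Q))
                         (quot_module (M\<lparr>carrier := Q\<rparr>) (P \<inter> Q))"
    and X: "X \<in> carrier (quot_module (M\<lparr>carrier := P\<rparr>) (P \<inter> Q))"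
  interpret quotient_hom R M P Q f
    using assms(1,2) Q f
    by (simp add: quotient_hom_def quotient_hom_axioms_def left_module_over_def)
  obtain p where "p \<in> P" "X = (P \<inter> Q) +>\<^bsub>M\<^esub> p"
    using X by (auto simp: quot_module_restrict_simps)
  moreover have "graph \<subseteq> P \<or> P \<subseteq> graph"
    using assms(3) graph_subset_if_strongly_irreducible subset_graph_if_strongly_hollow by blast
  ultimately show "f X = \<zero>\<^bsub>quot_module (M\<lparr>carrier := Q\<rparr>) (P \<inter> Q)\<^esub>"
    using hom_vanishes_if_graph_subset hom_vanishes_if_subset_graph
    by (auto simp: quot_module_restrict_simps)
qed

end
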